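(* Assume $f$ satisfies $(f_1)$ (or $(f_1')$), $(f_2)$ and $(f_3)$. Let $(u_n)\subset X$ be such that there is $d>0$ with $I(u_n)<d$ for all $n$ and $\|I'(u_n)\|_{X'}(1+\|u_n\|_X)\to0$. Then $(u_n)$ is bounded in $H^{1/2}(\mathbb{R})$.
   Context: $\|u\|^2=\int\int\frac{|u(x)-u(y)|^2}{|x-y|^2}dxdy+\|u\|_2^2$; $\|u\|_*^2=\int\ln(1+|x|)u^2$; $X=\{u\in H^{1/2}(\mathbb{R}):\|u\|_*<\infty\}$, $\|u\|_X^2=\|u\|^2+\|u\|_*^2$, $X'$ its dual. $V_0(u)=\int\int\ln|x-y|u(x)^2u(y)^2dxdy$, $F(s)=\int_0^sf$, $I(u)=\frac12\|u\|^2+\frac14V_0(u)-\int F(u)$. $(f_1)$/$(f_1')$: $f$ continuous with critical (resp. subcritical, and $f$ odd) exponential growth, $f(0)=0$, $F\ge0$. $(f_2)$: $f(t)/t\to0$ as $t\to0$. $(f_3)$: there is $\theta>4$ with $f(t)t\ge\theta F(t)>0$ for $t\ne0$. *)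

theory Defs
  imports "HOL-Analysis.Analysis"
begin

text \<open>Gagliardo double integral and L2 part of the H^{1/2}(R) norm (as in the paper, no constant).\<close>
definition gagliardo :: "(real \<Rightarrow> real) \<Rightarrow> ennreal" where
  "gagliardo u = (\<integral>\<^sup>+ x. \<integral>\<^sup>+ y. ennreal ((u x - u y)^2 / (x - y)^2) \<partial>lborel \<partial>lborel)"

definition L2sq :: "(real \<Rightarrow> real) \<Rightarrow> ennreal" where
  "L2sq u = (\<integral>\<^sup>+ x. ennreal ((u x)^2) \<partial>lborel)"

definition H12 :: "(real \<Rightarrow> real) set" where
  "H12 = {u. u \<in> borel_measurable lborel \<and> gagliardo u < \<infinity> \<and> L2sq u < \<infinity>}"

definition hnorm :: "(real \<Rightarrow> real) \<Rightarrow> real" where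
  "hnorm u = sqrt (enn2real (gagliardo u) + enn2real (L2sq u))"

definition starsq :: "(real \<Rightarrow> real) \<Rightarrow> ennreal" where
  "starsq u = (\<integral>\<^sup>+ x. ennreal (ln (1 + \<bar>x\<bar>) * (u x)^2) \<partial>lborel)"

definition Xsp :: "(real \<Rightarrow> real) set" where
  "Xsp = {u \<in> H12. starsq u < \<infinity>}"

definition normX :: "(real \<Rightarrow> real) \<Rightarrow> real" where
  "normX u = sqrt ((hnorm u)^2 + enn2real (starsq u))"

definition V0 :: "(real \<Rightarrow> real) \<Rightarrow> real" where
  "V0 u = (\<integral> p. ln \<bar>fst p - snd p\<bar> * (u (fst p))^2 * (u (snd p))^2 \<partial>(lborel \<Otimes>\<^sub>M lborel))"

definition primF :: "(real \<Rightarrow> real) \<Rightarrow> real \<Rightarrow> real" where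
  "primF f s = (LBINT t=0..s. f t)"

definition Ifun :: "(real \<Rightarrow> real) \<Rightarrow> (real \<Rightarrow> real) \<Rightarrow> real" where
  "Ifun f u = (hnorm u)^2 / 2 + V0 u / 4 - (\<integral> x. primF f (u x) \<partial>lborel)"

text \<open>I'(u)v as the (Gateaux) directional derivative; I is C^1 on X in the paper.\<close>
definition dI :: "(real \<Rightarrow> real) \<Rightarrow> (real \<Rightarrow> real) \<Rightarrow> (real \<Rightarrow> real) \<Rightarrow> real" where
  "dI f u v = deriv (\<lambda>t. Ifun f (\<lambda>x. u x + t * v x)) 0"

text \<open>\<parallel>I'(u)\<parallel>_{X'} (as an extended real, so unbounded functionals give \<infinity>)\<close>
definition dualnorm_dI :: "(real \<Rightarrow> real) \<Rightarrow> (real \<Rightarrow> real) \<Rightarrow> ereal" where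
  "dualnorm_dI f u = (SUP v \<in> {v \<in> Xsp. normX v \<le> 1}. ereal \<bar>dI f u v\<bar>)"

definition critical_exp_growth :: "(real \<Rightarrow> real) \<Rightarrow> bool" where
  "critical_exp_growth f \<longleftrightarrow> (\<exists>\<alpha>0>0.
     (\<forall>\<alpha>>\<alpha>0. ((\<lambda>t. \<bar>f t\<bar> / exp (\<alpha> * t^2)) \<longlongrightarrow> 0) at_infinity) \<and>
     (\<forall>\<alpha>. 0 < \<alpha> \<and> \<alpha> < \<alpha>0 \<longrightarrow> filterlim (\<lambda>t. \<bar>f t\<bar> / exp (\<alpha> * t^2)) at_top at_infinity))"

definition subcritical_exp_growth :: "(real \<Rightarrow> real) \<Rightarrow> bool" where
  "subcritical_exp_growth f \<longleftrightarrow>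
     (\<forall>\<alpha>>0. ((\<lambda>t. \<bar>f t\<bar> / exp (\<alpha> * t^2)) \<longlongrightarrow> 0) at_infinity)"

definition f1 :: "(real \<Rightarrow> real) \<Rightarrow> bool" where
  "f1 f \<longleftrightarrow> continuous_on UNIV f \<and> critical_exp_growth f \<and> f 0 = 0 \<and> (\<forall>s. primF f s \<ge> 0)"

definition f1' :: "(real \<Rightarrow> real) \<Rightarrow> bool" where
  "f1' f \<longleftrightarrow> continuous_on UNIV f \<and> subcritical_exp_growth f \<and> (\<forall>t. f (-t) = - f t)
     \<and> f 0 = 0 \<and> (\<forall>s. primF f s \<ge> 0)"

definition f2 :: "(real \<Rightarrow> real) \<Rightarrow> bool" where
  "f2 f \<longleftrightarrow> ((\<lambda>t. f t / t) \<longlongrightarrow> 0) (at 0)"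

definition f3 :: "(real \<Rightarrow> real) \<Rightarrow> bool" where
  "f3 f \<longleftrightarrow> (\<exists>\<theta>>4. \<forall>t. t \<noteq> 0 \<longrightarrow> f t * t \<ge> \<theta> * primF f t \<and> \<theta> * primF f t > 0)"

end

theory Submission
  imports Defs
begin

text \<open>The Ambrosetti--Rabinowitz argument. As \<open>V\<^sub>0\<close> is homogeneous of degree 4 and
  \<open>f(t) t \<ge> \<theta> F(t)\<close> with \<open>\<theta> > 4\<close>, formally \<open>I(u) - I'(u)u / 4 \<ge> \<parallel>u\<parallel>\<^sup>2 / 4\<close>.
  Since \<open>I\<close> need not be differentiable in the direction \<open>u\<close> itself, \<open>I'(u)\<close> is tested on the
  truncations \<open>T\<^sub>m u\<close> instead: they lie in \<open>X\<close> with \<open>\<parallel>T\<^sub>m u\<parallel>\<^sub>X \<le> \<parallel>u\<parallel>\<^sub>X\<close>, \<open>I\<close> is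
  differentiable along them (differentiation under the integral sign), and by dominated
  convergence \<open>I(u) - I'(u)(T\<^sub>m u) / 4 \<ge> \<parallel>u\<parallel>\<^sup>2 / 4 - \<epsilon>\<close> for large \<open>m\<close>. Therefore
  \<open>\<parallel>u\<parallel>\<^sup>2 \<le> 4 I(u) + 1 + \<parallel>I'(u)\<parallel> \<parallel>u\<parallel>\<^sub>X\<close>, and the last term is eventually below \<open>1\<close>.\<close>

section \<open>Differentiation under the integral sign\<close>

lemma integral_dominated_convergence_at:
  fixes s :: "'b::first_countable_topology \<Rightarrow> 'a \<Rightarrow> 'c::{banach, second_countable_topology}"
  assumes "f \<in> borel_measurable M" "\<And>t. s t \<in> borel_measurable M" "integrable M w"
    and lim: "AE x in M. ((\<lambda>t. s t x) \<longlongrightarrow> f x) (at a within S)"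
    and bound: "\<forall>\<^sub>F t in at a within S. AE x in M. norm (s t x) \<le> w x"
  shows "((\<lambda>t. integral\<^sup>L M (s t)) \<longlongrightarrow> integral\<^sup>L M f) (at a within S)"
  unfolding tendsto_at_iff_sequentially comp_def
proof (intro allI impI)
  fix X :: "nat \<Rightarrow> 'b" assume "\<forall>i. X i \<in> S - {a}" "X \<longlonglongrightarrow> a"
  then have X: "filterlim X (at a within S) sequentially"
    by (auto simp: filterlim_at)
  from filterlim_iff[THEN iffD1, OF X, rule_format, OF bound]
  obtain N where w: "\<And>n. N \<le> n \<Longrightarrow> AE x in M. norm (s (X n) x) \<le> w x"
    by (auto simp: eventually_sequentially)
  show "(\<lambda>n. integral\<^sup>L M (s (X n))) \<longlonglongrightarrow> integral\<^sup>L M f"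
  proof (rule LIMSEQ_offset, rule integral_dominated_convergence)
    show "AE x in M. norm (s (X (n + N)) x) \<le> w x" for n
      by (rule w) auto
    show "AE x in M. (\<lambda>n. s (X (n + N)) x) \<longlonglongrightarrow> f x"
      using lim
    proof eventually_elim
      fix x assume "((\<lambda>t. s t x) \<longlongrightarrow> f x) (at a within S)"
      then show "(\<lambda>n. s (X (n + N)) x) \<longlonglongrightarrow> f x"
        by (intro LIMSEQ_ignore_initial_segment filterlim_compose[OF _ X])
    qed
  qed fact+
qed

lemma tendsto_integral_eventually_eq:
  fixes s :: "nat \<Rightarrow> 'a \<Rightarrow> real"
  assumes "f \<in> borel_measurable M" "\<And>m. s m \<in> borel_measurable M" "integrable M w"
    and "\<And>x. x \<in> space M \<Longrightarrow> \<forall>\<^sub>F m in sequentially. s m x = f x"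
    and "\<And>m x. x \<in> space M \<Longrightarrow> \<bar>s m x\<bar> \<le> w x"
  shows "(\<lambda>m. \<integral>x. s m x \<partial>M) \<longlonglongrightarrow> (\<integral>x. f x \<partial>M)"
  by (rule integral_dominated_convergence[where w=w])
    (use assms in \<open>auto intro!: AE_I2 intro: tendsto_eventually\<close>)

lemma tendsto_integral_sublevel:
  fixes h :: "'a \<Rightarrow> real"
  assumes "integrable M h" and [measurable]: "u \<in> borel_measurable M"
  shows "(\<lambda>m. \<integral>x. (if \<bar>u x\<bar> \<le> real m then h x else 0) \<partial>M) \<longlonglongrightarrow> (\<integral>x. h x \<partial>M)"
proof (rule tendsto_integral_eventually_eq[where w="\<lambda>x. \<bar>h x\<bar>"])
  show [measurable]: "h \<in> borel_measurable M"
    using assms(1) by (rule borel_measurable_integrable)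
  show "(\<lambda>x. if \<bar>u x\<bar> \<le> real m then h x else 0) \<in> borel_measurable M" for m
    by measurable
  show "integrable M (\<lambda>x. \<bar>h x\<bar>)"
    using assms(1) by simp
  show "\<forall>\<^sub>F m in sequentially. (if \<bar>u x\<bar> \<le> real m then h x else 0) = h x" for x
    using eventually_ge_at_top[of "nat \<lceil>\<bar>u x\<bar>\<rceil>"] by eventually_elim (auto simp: le_nat_iff)
  show "\<bar>if \<bar>u x\<bar> \<le> real m then h x else 0\<bar> \<le> \<bar>h x\<bar>" for m x
    by simp
qed

lemma has_real_derivative_integral:
  fixes \<phi> :: "real \<Rightarrow> 'a \<Rightarrow> real"
  assumes [measurable]: "\<And>t. \<phi> t \<in> borel_measurable M" "\<psi> \<in> borel_measurable M"
    and int0: "integrable M (\<phi> 0)" and intw: "integrable M w" and "0 < \<delta>"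
    and bound: "\<And>t z. \<bar>t\<bar> < \<delta> \<Longrightarrow> z \<in> space M \<Longrightarrow> \<bar>\<phi> t z - \<phi> 0 z\<bar> \<le> \<bar>t\<bar> * w z"
    and der: "\<And>z. z \<in> space M \<Longrightarrow> ((\<lambda>t. \<phi> t z) has_real_derivative \<psi> z) (at 0)"
  shows "((\<lambda>t. \<integral>z. \<phi> t z \<partial>M) has_real_derivative (\<integral>z. \<psi> z \<partial>M)) (at 0)"
proof -
  have [measurable]: "w \<in> borel_measurable M"
    using intw by auto
  have near: "\<forall>\<^sub>F t in at 0. t \<noteq> 0 \<and> \<bar>t\<bar> < \<delta>"
    using \<open>0 < \<delta>\<close> by (auto simp: eventually_at dist_norm intro!: exI[of _ \<delta>])
  have int_t: "integrable M (\<phi> t)" if "\<bar>t\<bar> < \<delta>" for t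
  proof (rule Bochner_Integration.integrable_bound[where f="\<lambda>z. \<bar>\<phi> 0 z\<bar> + \<bar>t\<bar> * w z"])
    show "integrable M (\<lambda>z. \<bar>\<phi> 0 z\<bar> + \<bar>t\<bar> * w z)"
      using int0 intw by auto
    show "AE z in M. norm (\<phi> t z) \<le> norm (\<bar>\<phi> 0 z\<bar> + \<bar>t\<bar> * w z)"
      using bound[OF that] by (intro AE_I2) (smt (verit) real_norm_def)
  qed simp
  have quotient: "\<forall>\<^sub>F t in at 0. ((\<integral>z. \<phi> t z \<partial>M) - (\<integral>z. \<phi> 0 z \<partial>M)) / (t - 0)
      = (\<integral>z. (\<phi> t z - \<phi> 0 z) / t \<partial>M)"
    using near by eventually_elim (simp add: int0 int_t)
  have "((\<lambda>t. \<integral>z. (\<phi> t z - \<phi> 0 z) / t \<partial>M) \<longlongrightarrow> (\<integral>z. \<psi> z \<partial>M)) (at 0)"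
  proof (rule integral_dominated_convergence_at[where w=w])
    show "AE z in M. ((\<lambda>t. (\<phi> t z - \<phi> 0 z) / t) \<longlongrightarrow> \<psi> z) (at 0)"
      using der by (intro AE_I2) (simp add: has_field_derivative_iff)
    show "\<forall>\<^sub>F t in at 0. AE z in M. norm ((\<phi> t z - \<phi> 0 z) / t) \<le> w z"
      using near
    proof eventually_elim
      case (elim t)
      then show ?case
        using bound by (intro AE_I2) (simp add: abs_divide divide_le_eq mult.commute)
    qed
  qed (use intw in auto)
  then show ?thesis
    unfolding has_field_derivative_iff by (rule tendsto_cong[THEN iffD2, OF quotient, rotated])
qed

lemma eventually_not_integrable_near_0:
  fixes \<phi> :: "real \<Rightarrow> 'a \<Rightarrow> real"
  assumes meas: "\<And>t. \<phi> t \<in> borel_measurable M"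
    and intg: "integrable M g" and "0 \<le> C" and "0 < \<delta>"
    and bound: "\<And>t z. \<bar>t\<bar> < \<delta> \<Longrightarrow> z \<in> space M \<Longrightarrow>
      \<bar>\<phi> t z - \<phi> 0 z\<bar> \<le> \<bar>t\<bar> * (g z + C * \<bar>\<phi> 0 z\<bar>)"
    and not_int: "\<not> integrable M (\<phi> 0)"
  shows "\<forall>\<^sub>F t in nhds 0. \<not> integrable M (\<phi> t)"
proof -
  have small: "((\<lambda>t::real. \<bar>t\<bar>) \<longlongrightarrow> 0) (nhds 0)"
    using tendsto_rabs[OF filterlim_ident[of "nhds (0::real)"]] by simp
  have "\<forall>\<^sub>F t in nhds 0. \<bar>t\<bar> < \<delta> \<and> \<bar>t\<bar> < 1 \<and> \<bar>t\<bar> * C < 1/2"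
    using \<open>0 < \<delta>\<close> by (intro eventually_conj order_tendstoD(2)[OF small]
      order_tendstoD(2)[OF tendsto_mult_left_zero[OF small]]) auto
  then show ?thesis
  proof eventually_elim
    case (elim t)
    show "\<not> integrable M (\<phi> t)"
    proof
      assume "integrable M (\<phi> t)"
      then have dom: "integrable M (\<lambda>z. 2 * \<bar>\<phi> t z\<bar> + 2 * \<bar>g z\<bar>)"
        using intg by auto
      have "AE z in M. norm (\<phi> 0 z) \<le> norm (2 * \<bar>\<phi> t z\<bar> + 2 * \<bar>g z\<bar>)"
      proof (rule AE_I2)
        fix z assume "z \<in> space M"
        have "\<bar>t\<bar> * g z \<le> \<bar>g z\<bar>"
          using elim mult_left_le_one_le[of "\<bar>g z\<bar>" "\<bar>t\<bar>"] abs_ge_self[of "\<bar>t\<bar> * g z"]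
          by (simp add: abs_mult)
        moreover have "\<bar>t\<bar> * C * \<bar>\<phi> 0 z\<bar> \<le> 1/2 * \<bar>\<phi> 0 z\<bar>"
          using elim by (intro mult_right_mono) auto
        moreover have "\<bar>\<phi> t z - \<phi> 0 z\<bar> \<le> \<bar>t\<bar> * g z + \<bar>t\<bar> * C * \<bar>\<phi> 0 z\<bar>"
          using bound[of t z] elim \<open>z \<in> space M\<close> by (simp add: distrib_left mult.assoc)
        ultimately have "\<bar>\<phi> t z - \<phi> 0 z\<bar> \<le> \<bar>g z\<bar> + 1/2 * \<bar>\<phi> 0 z\<bar>"
          by (meson add_mono order_trans)
        moreover have "\<bar>\<phi> 0 z\<bar> \<le> \<bar>\<phi> t z\<bar> + \<bar>\<phi> t z - \<phi> 0 z\<bar>"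
          using abs_triangle_ineq2[of "\<phi> 0 z" "\<phi> t z"] by (simp add: abs_minus_commute)
        ultimately show "norm (\<phi> 0 z) \<le> norm (2 * \<bar>\<phi> t z\<bar> + 2 * \<bar>g z\<bar>)"
          by simp
      qed
      with not_int Bochner_Integration.integrable_bound[OF dom meas] show False
        by blast
    qed
  qed
qed

text \<open>The \<open>if\<close> reflects the junk value \<open>0\<close> of the Bochner integral of a non-integrable
  function.\<close>
lemma has_real_derivative_integral_or_zero:
  fixes \<phi> :: "real \<Rightarrow> 'a \<Rightarrow> real"
  assumes [measurable]: "\<And>t. \<phi> t \<in> borel_measurable M" "\<psi> \<in> borel_measurable M"
    and intg: "integrable M g" and "0 \<le> C" and "0 < \<delta>"
    and bound: "\<And>t z. \<bar>t\<bar> < \<delta> \<Longrightarrow> z \<in> space M \<Longrightarrow>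
      \<bar>\<phi> t z - \<phi> 0 z\<bar> \<le> \<bar>t\<bar> * (g z + C * \<bar>\<phi> 0 z\<bar>)"
    and der: "\<And>z. z \<in> space M \<Longrightarrow> ((\<lambda>t. \<phi> t z) has_real_derivative \<psi> z) (at 0)"
  shows "((\<lambda>t. \<integral>z. \<phi> t z \<partial>M) has_real_derivative
           (if integrable M (\<phi> 0) then \<integral>z. \<psi> z \<partial>M else 0)) (at 0)"
proof (cases "integrable M (\<phi> 0)")
  case True
  have "((\<lambda>t. \<integral>z. \<phi> t z \<partial>M) has_real_derivative (\<integral>z. \<psi> z \<partial>M)) (at 0)"
  proof (rule has_real_derivative_integral[where w="\<lambda>z. \<bar>g z\<bar> + C * \<bar>\<phi> 0 z\<bar>"])
    show "\<bar>\<phi> t z - \<phi> 0 z\<bar> \<le> \<bar>t\<bar> * (\<bar>g z\<bar> + C * \<bar>\<phi> 0 z\<bar>)"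
      if "\<bar>t\<bar> < \<delta>" "z \<in> space M" for t z
      using bound[OF that] mult_left_mono[OF abs_ge_self[of "g z"] abs_ge_zero[of t]]
      by (simp add: distrib_left)
  qed (use True intg \<open>0 < \<delta>\<close> der in auto)
  with True show ?thesis
    by simp
next
  case False
  have "\<forall>\<^sub>F t in nhds 0. (\<integral>z. \<phi> t z \<partial>M) = 0"
    using eventually_not_integrable_near_0[OF _ intg \<open>0 \<le> C\<close> \<open>0 < \<delta>\<close> bound False]
    by (auto elim: eventually_mono intro: not_integrable_integral_eq)
  then have "((\<lambda>t. \<integral>z. \<phi> t z \<partial>M) has_real_derivative 0) (at 0)"
    by (subst DERIV_cong_ev[OF refl _ refl]) auto
  with False show ?thesis
    by simp
qed

lemma abs_square_shift_le:
  fixes a b t :: real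
  assumes "\<bar>t\<bar> < 1"
  shows "\<bar>(a + t*b)^2 - a^2\<bar> \<le> \<bar>t\<bar> * (a^2 + 2 * b^2)"
proof -
  have "\<bar>2*a*b\<bar> \<le> a^2 + b^2"
    using sum_squares_bound[of a b] sum_squares_bound[of a "-b"] by (auto simp: abs_if)
  moreover have "\<bar>t*b^2\<bar> \<le> b^2"
    using assms by (simp add: abs_mult mult_left_le_one_le)
  ultimately have "\<bar>2*a*b + t*b^2\<bar> \<le> a^2 + 2*b^2"
    by linarith
  moreover have "(a + t*b)^2 - a^2 = t * (2*a*b + t*b^2)"
    by (simp add: power2_eq_square algebra_simps)
  ultimately show ?thesis
    by (simp add: abs_mult mult_left_mono)
qed

lemma abs_square_product_shift_le:
  fixes a b c d t :: real
  assumes "\<bar>b\<bar> \<le> \<bar>a\<bar>" and "\<bar>d\<bar> \<le> \<bar>c\<bar>" and t: "\<bar>t\<bar> < 1"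
  shows "\<bar>(a + t*b)^2 * (c + t*d)^2 - a^2 * c^2\<bar> \<le> \<bar>t\<bar> * (15 * (a^2 * c^2))"
proof -
  define p q where "p = (a + t*b)^2 - a^2" and "q = (c + t*d)^2 - c^2"
  have p: "\<bar>p\<bar> \<le> \<bar>t\<bar> * (3 * a^2)"
    unfolding p_def using abs_le_square_iff[of b a] assms(1)
    by (intro order_trans[OF abs_square_shift_le[OF t]] mult_left_mono) auto
  have q: "\<bar>q\<bar> \<le> \<bar>t\<bar> * (3 * c^2)"
    unfolding q_def using abs_le_square_iff[of d c] assms(2)
    by (intro order_trans[OF abs_square_shift_le[OF t]] mult_left_mono) auto
  have "\<bar>a^2 * q\<bar> \<le> \<bar>t\<bar> * (3 * (a^2 * c^2))"
    using mult_left_mono[OF q, of "a^2"] by (simp add: abs_mult mult_ac)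
  moreover have "\<bar>c^2 * p\<bar> \<le> \<bar>t\<bar> * (3 * (a^2 * c^2))"
    using mult_left_mono[OF p, of "c^2"] by (simp add: abs_mult mult_ac)
  moreover have "\<bar>p * q\<bar> \<le> \<bar>t\<bar> * (9 * (a^2 * c^2))"
  proof -
    have "\<bar>p\<bar> * \<bar>q\<bar> \<le> (\<bar>t\<bar> * (3 * a^2)) * (\<bar>t\<bar> * (3 * c^2))"
      using p q by (intro mult_mono) auto
    also have "\<dots> \<le> \<bar>t\<bar> * (9 * (a^2 * c^2))"
      using t mult_right_mono[of "\<bar>t\<bar> * \<bar>t\<bar>" "\<bar>t\<bar>" "9 * (a^2 * c^2)"]
      by (simp add: mult_ac mult_left_le_one_le)
    finally show ?thesis
      by (simp add: abs_mult)
  qed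
  moreover have "\<bar>a^2 * q + c^2 * p + p * q\<bar> \<le> \<bar>a^2 * q\<bar> + \<bar>c^2 * p\<bar> + \<bar>p * q\<bar>"
    using abs_triangle_ineq[of "a^2 * q + c^2 * p" "p * q"] abs_triangle_ineq[of "a^2 * q" "c^2 * p"]
    by linarith
  moreover have "(a + t*b)^2 * (c + t*d)^2 - a^2 * c^2 = a^2 * q + c^2 * p + p * q"
    unfolding p_def q_def by (simp add: algebra_simps)
  ultimately show ?thesis
    by (simp only:)
qed

lemma abs_mult_le_square: "\<bar>b\<bar> \<le> \<bar>a\<bar> \<Longrightarrow> \<bar>a * b\<bar> \<le> a^2"
  for a b :: real
  using mult_left_mono[of "\<bar>b\<bar>" "\<bar>a\<bar>" "\<bar>a\<bar>"] by (simp add: abs_mult power2_eq_square)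

lemma has_real_derivative_integral_square:
  fixes a b :: "'a \<Rightarrow> real"
  assumes [measurable]: "a \<in> borel_measurable M" "b \<in> borel_measurable M"
    and "integrable M (\<lambda>z. (a z)^2)" "integrable M (\<lambda>z. (b z)^2)"
  shows "((\<lambda>t. \<integral>z. (a z + t * b z)^2 \<partial>M) has_real_derivative (\<integral>z. 2 * a z * b z \<partial>M)) (at 0)"
  by (rule has_real_derivative_integral[where w="\<lambda>z. (a z)^2 + 2 * (b z)^2" and \<delta>=1])
    (use assms abs_square_shift_le in \<open>auto intro!: derivative_eq_intros\<close>)

section \<open>The spaces \<open>H12\<close> and \<open>Xsp\<close>\<close>

abbreviation lborel2 :: "(real \<times> real) measure" where
  "lborel2 \<equiv> lborel \<Otimes>\<^sub>M lborel"

definition diffquot :: "(real \<Rightarrow> real) \<Rightarrow> real \<times> real \<Rightarrow> real" where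
  "diffquot w z = (w (fst z) - w (snd z)) / (fst z - snd z)"

lemma diffquot_measurable [measurable]:
  assumes [measurable]: "w \<in> borel_measurable lborel"
  shows "diffquot w \<in> borel_measurable lborel2"
  unfolding diffquot_def by measurable

lemma diffquot_add_scaled: "diffquot (\<lambda>x. u x + t * v x) z = diffquot u z + t * diffquot v z"
  unfolding diffquot_def by (simp add: field_simps diff_divide_distrib add_divide_distrib)

lemma gagliardo_eq_diffquot:
  assumes [measurable]: "w \<in> borel_measurable lborel"
  shows "gagliardo w = (\<integral>\<^sup>+z. ennreal ((diffquot w z)^2) \<partial>lborel2)"
proof -
  have "gagliardo w = (\<integral>\<^sup>+x. \<integral>\<^sup>+y. (\<lambda>z. ennreal ((diffquot w z)^2)) (x, y) \<partial>lborel \<partial>lborel)"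
    unfolding gagliardo_def diffquot_def by (simp add: power_divide)
  also have "\<dots> = (\<integral>\<^sup>+z. ennreal ((diffquot w z)^2) \<partial>lborel2)"
    by (rule lborel.nn_integral_fst) measurable
  finally show ?thesis .
qed

lemma enn2real_gagliardo:
  "w \<in> borel_measurable lborel \<Longrightarrow> enn2real (gagliardo w) = (\<integral>z. (diffquot w z)^2 \<partial>lborel2)"
  by (simp add: gagliardo_eq_diffquot integral_eq_nn_integral)

lemma enn2real_L2sq:
  "w \<in> borel_measurable lborel \<Longrightarrow> enn2real (L2sq w) = (\<integral>x. (w x)^2 \<partial>lborel)"
  by (simp add: L2sq_def integral_eq_nn_integral)

lemma H12_D:
  assumes "u \<in> H12"
  shows H12_measurable: "u \<in> borel_measurable lborel"
    and H12_integrable_diffquot_square: "integrable lborel2 (\<lambda>z. (diffquot u z)^2)"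
    and H12_integrable_square: "integrable lborel (\<lambda>x. (u x)^2)"
proof -
  show [measurable]: "u \<in> borel_measurable lborel"
    using assms by (simp add: H12_def)
  show "integrable lborel2 (\<lambda>z. (diffquot u z)^2)"
    using assms by (intro integrableI_bounded) (auto simp: H12_def gagliardo_eq_diffquot)
  show "integrable lborel (\<lambda>x. (u x)^2)"
    using assms by (intro integrableI_bounded) (auto simp: H12_def L2sq_def)
qed

lemma hnorm_sq: "(hnorm w)^2 = enn2real (gagliardo w) + enn2real (L2sq w)"
  unfolding hnorm_def by simp

lemma normX_sq: "(normX w)^2 = (hnorm w)^2 + enn2real (starsq w)"
  unfolding normX_def by simp

lemma hnorm_nonneg: "0 \<le> hnorm w"
  unfolding hnorm_def by simp

lemma normX_nonneg: "0 \<le> normX w"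
  unfolding normX_def by simp

lemma hnorm_le_normX: "hnorm w \<le> normX w"
  unfolding normX_def by (simp add: real_le_rsqrt)

lemma nn_integral_le_scaled:
  assumes "b \<in> borel_measurable M" "0 \<le> c" "\<And>x. x \<in> space M \<Longrightarrow> a x \<le> c * b x"
  shows "(\<integral>\<^sup>+x. ennreal (a x) \<partial>M) \<le> ennreal c * (\<integral>\<^sup>+x. ennreal (b x) \<partial>M)"
proof -
  have "(\<integral>\<^sup>+x. ennreal (a x) \<partial>M) \<le> (\<integral>\<^sup>+x. ennreal c * ennreal (b x) \<partial>M)"
    using assms by (intro nn_integral_mono) (simp add: ennreal_mult'[symmetric] ennreal_leI)
  also have "\<dots> = ennreal c * (\<integral>\<^sup>+x. ennreal (b x) \<partial>M)"
    using assms by (intro nn_integral_cmult) measurable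
  finally show ?thesis .
qed

lemma enn2real_le_scaled:
  assumes "a \<le> ennreal c * b" "b < \<infinity>" "0 \<le> c"
  shows "enn2real a \<le> c * enn2real b"
proof -
  have "enn2real a \<le> enn2real (ennreal c * b)"
    using assms by (intro enn2real_mono) (auto simp: ennreal_mult_less_top)
  then show ?thesis
    using assms by (simp add: enn2real_mult)
qed

lemma Xsp_dominated:
  assumes u: "u \<in> Xsp" and v [measurable]: "v \<in> borel_measurable lborel" and "0 \<le> c"
    and pointwise: "\<And>x. \<bar>v x\<bar> \<le> c * \<bar>u x\<bar>"
    and increments: "\<And>x y. \<bar>v x - v y\<bar> \<le> c * \<bar>u x - u y\<bar>"
  shows "v \<in> Xsp" and "normX v \<le> c * normX u"
proof -
  have um [measurable]: "u \<in> borel_measurable lborel" and finite: "gagliardo u < \<infinity>"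
    "L2sq u < \<infinity>" "starsq u < \<infinity>"
    using u by (auto simp: Xsp_def H12_def)
  have square_le: "a^2 \<le> c^2 * b^2" if "\<bar>a\<bar> \<le> c * \<bar>b\<bar>" for a b :: real
    using power_mono[OF that abs_ge_zero, of 2] by (simp add: power_mult_distrib)
  have "\<bar>diffquot v z\<bar> \<le> c * \<bar>diffquot u z\<bar>" for z
    using increments[of "fst z" "snd z"] by (simp add: diffquot_def abs_divide divide_right_mono)
  then have g: "gagliardo v \<le> ennreal (c^2) * gagliardo u"
    unfolding gagliardo_eq_diffquot[OF um] gagliardo_eq_diffquot[OF v]
    by (intro nn_integral_le_scaled square_le) auto
  have l: "L2sq v \<le> ennreal (c^2) * L2sq u"
    unfolding L2sq_def by (intro nn_integral_le_scaled square_le pointwise) auto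
  have s: "starsq v \<le> ennreal (c^2) * starsq u"
    unfolding starsq_def
    using mult_left_mono[OF square_le[OF pointwise], of "ln (1 + \<bar>_\<bar>)"]
    by (intro nn_integral_le_scaled) (auto simp: mult_ac)
  have "gagliardo v < \<infinity>" "L2sq v < \<infinity>" "starsq v < \<infinity>"
    using g l s finite by (simp_all add: ennreal_mult_less_top le_less_trans)
  then show "v \<in> Xsp"
    by (simp add: Xsp_def H12_def)
  have "(normX v)^2 \<le> c^2 * (normX u)^2"
    unfolding normX_sq hnorm_sq
    using enn2real_le_scaled[OF g finite(1)] enn2real_le_scaled[OF l finite(2)]
      enn2real_le_scaled[OF s finite(3)] by (simp add: algebra_simps)
  also have "\<dots> = (c * normX u)^2"
    by (simp add: power_mult_distrib)
  finally show "normX v \<le> c * normX u"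
    by (rule power2_le_imp_le) (simp add: \<open>0 \<le> c\<close> normX_nonneg)
qed

section \<open>The primitive \<open>F\<close>\<close>

lemma primF_0 [simp]: "primF f 0 = 0"
  unfolding primF_def zero_ereal_def by (rule interval_integral_endpoints_same)

lemma has_real_derivative_primF:
  assumes "continuous_on UNIV f"
  shows "(primF f has_real_derivative f s) (at s)"
proof -
  have "((\<lambda>u. LBINT y=ereal 0..ereal u. f y) has_vector_derivative f s) (at s within {min 0 s - 1..max 0 s + 1})"
    by (rule interval_integral_FTC2) (use assms in \<open>auto intro: continuous_on_subset\<close>)
  then have "((\<lambda>u. LBINT y=ereal 0..ereal u. f y) has_vector_derivative f s)
      (at s within {min 0 s - 1<..<max 0 s + 1})"
    by (rule has_vector_derivative_within_subset) auto
  then have "((\<lambda>u. LBINT y=ereal 0..ereal u. f y) has_vector_derivative f s) (at s)"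
    by (subst (asm) has_vector_derivative_within_open) auto
  moreover have "primF f = (\<lambda>u. LBINT y=ereal 0..ereal u. f y)"
    by (simp add: primF_def zero_ereal_def fun_eq_iff)
  ultimately show ?thesis
    by (simp add: has_real_derivative_iff_has_vector_derivative)
qed

lemma primF_measurable [measurable]: "continuous_on UNIV f \<Longrightarrow> primF f \<in> borel_measurable borel"
  by (meson DERIV_isCont borel_measurable_continuous_onI continuous_at_imp_continuous_on
      has_real_derivative_primF)

lemma f2_linear_bound:
  assumes "continuous_on UNIV f" and "f2 f" and "f 0 = 0"
  obtains L where "0 \<le> L" and "\<And>s. \<bar>s\<bar> \<le> R \<Longrightarrow> \<bar>f s\<bar> \<le> L * \<bar>s\<bar>"
proof -
  obtain \<delta> where "\<delta> > 0" and near0: "\<And>t. t \<noteq> 0 \<Longrightarrow> \<bar>t\<bar> < \<delta> \<Longrightarrow> \<bar>f t / t\<bar> < 1"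
    using \<open>f2 f\<close> unfolding f2_def LIM_eq by (metis zero_less_one diff_zero real_norm_def)
  obtain B where "\<forall>y \<in> f ` {-\<bar>R\<bar>..\<bar>R\<bar>}. norm y \<le> B"
    using compact_imp_bounded[OF compact_continuous_image[OF
        continuous_on_subset[OF assms(1)], of "{-\<bar>R\<bar>..\<bar>R\<bar>}"]]
    unfolding bounded_iff by blast
  then have B: "\<And>t. \<bar>t\<bar> \<le> \<bar>R\<bar> \<Longrightarrow> \<bar>f t\<bar> \<le> B"
    by (simp add: abs_le_iff)
  define L where "L = max 1 (\<bar>B\<bar> / \<delta>)"
  have "\<bar>f s\<bar> \<le> L * \<bar>s\<bar>" if "\<bar>s\<bar> \<le> R" for s
  proof (cases "s = 0 \<or> \<bar>s\<bar> < \<delta>")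
    case True
    then have "\<bar>f s\<bar> \<le> 1 * \<bar>s\<bar>"
      using near0[of s] \<open>f 0 = 0\<close> by (cases "s = 0") (auto simp: abs_divide divide_less_eq)
    also have "\<dots> \<le> L * \<bar>s\<bar>"
      unfolding L_def by (intro mult_right_mono) auto
    finally show ?thesis .
  next
    case False
    have "\<bar>f s\<bar> \<le> (\<bar>B\<bar> / \<delta>) * \<delta>"
      using B[of s] that \<open>\<delta> > 0\<close> by simp
    also have "\<dots> \<le> L * \<bar>s\<bar>"
      unfolding L_def using False \<open>\<delta> > 0\<close> by (intro mult_mono) auto
    finally show ?thesis .
  qed
  moreover have "0 \<le> L"
    unfolding L_def by simp
  ultimately show thesis
    using that by blast
qed

lemma primF_diff_le:
  assumes "continuous_on UNIV f" and "\<And>s. \<bar>s\<bar> \<le> K \<Longrightarrow> \<bar>f s\<bar> \<le> L * \<bar>s\<bar>" and "0 \<le> L"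
    and "\<bar>a\<bar> \<le> K" and "\<bar>b\<bar> \<le> K"
  shows "\<bar>primF f b - primF f a\<bar> \<le> L * K * \<bar>b - a\<bar>"
proof (rule field_differentiable_bound[where S="{-K..K}", simplified])
  show "(primF f has_field_derivative f z) (at z within {-K..K})" for z
    using has_real_derivative_primF[OF assms(1)] by (rule has_field_derivative_at_within)
  show "\<bar>f z\<bar> \<le> L * K" if "-K \<le> z \<and> z \<le> K" for z
  proof -
    have "\<bar>z\<bar> \<le> K"
      using that by linarith
    then show ?thesis
      using assms(2)[of z] mult_left_mono[of "\<bar>z\<bar>" K L] \<open>0 \<le> L\<close> by linarith
  qed
qed (use assms in auto)

lemma f3_D:
  assumes "f3 f" and "t \<noteq> 0"
  shows "0 < primF f t" and "4 * primF f t \<le> f t * t"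
proof -
  obtain \<theta> where "4 < \<theta>" and AR: "\<theta> * primF f t \<le> f t * t" and "0 < \<theta> * primF f t"
    using assms unfolding f3_def by blast
  then show "0 < primF f t"
    by (simp add: zero_less_mult_iff)
  then have "4 * primF f t \<le> \<theta> * primF f t"
    using \<open>4 < \<theta>\<close> by (intro mult_right_mono) auto
  with AR show "4 * primF f t \<le> f t * t"
    by linarith
qed

section \<open>Directional derivatives of \<open>I\<close>\<close>

lemma has_real_derivative_gagliardo:
  assumes "u \<in> H12" "v \<in> H12"
  shows "((\<lambda>t. enn2real (gagliardo (\<lambda>x. u x + t * v x))) has_real_derivative
           (\<integral>z. 2 * diffquot u z * diffquot v z \<partial>lborel2)) (at 0)"
proof -
  have [measurable]: "u \<in> borel_measurable lborel" "v \<in> borel_measurable lborel"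
    using assms by (auto dest: H12_measurable)
  have "enn2real (gagliardo (\<lambda>x. u x + t * v x)) = (\<integral>z. (diffquot u z + t * diffquot v z)^2 \<partial>lborel2)"
    for t by (subst enn2real_gagliardo) (auto simp: diffquot_add_scaled)
  then show ?thesis
    using has_real_derivative_integral_square[of "diffquot u" lborel2 "diffquot v"] assms
    by (simp add: H12_integrable_diffquot_square)
qed

lemma has_real_derivative_L2sq:
  assumes "u \<in> H12" "v \<in> H12"
  shows "((\<lambda>t. enn2real (L2sq (\<lambda>x. u x + t * v x))) has_real_derivative
           (\<integral>x. 2 * u x * v x \<partial>lborel)) (at 0)"
proof -
  have [measurable]: "u \<in> borel_measurable lborel" "v \<in> borel_measurable lborel"
    using assms by (auto dest: H12_measurable)
  have "enn2real (L2sq (\<lambda>x. u x + t * v x)) = (\<integral>x. (u x + t * v x)^2 \<partial>lborel)" for t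
    by (subst enn2real_L2sq) auto
  then show ?thesis
    using has_real_derivative_integral_square[of u lborel v] assms
    by (simp add: H12_integrable_square)
qed

definition dV0 :: "(real \<Rightarrow> real) \<Rightarrow> (real \<Rightarrow> real) \<Rightarrow> real" where
  "dV0 u v = (if integrable lborel2 (\<lambda>p. ln \<bar>fst p - snd p\<bar> * (u (fst p))^2 * (u (snd p))^2)
     then \<integral>p. ln \<bar>fst p - snd p\<bar> *
       (2 * u (fst p) * v (fst p) * (u (snd p))^2 + (u (fst p))^2 * (2 * u (snd p) * v (snd p))) \<partial>lborel2
     else 0)"

lemma has_real_derivative_V0:
  assumes [measurable]: "u \<in> borel_measurable lborel" "v \<in> borel_measurable lborel"
    and dominated: "\<And>x. \<bar>v x\<bar> \<le> \<bar>u x\<bar>"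
  shows "((\<lambda>t. V0 (\<lambda>x. u x + t * v x)) has_real_derivative dV0 u v) (at 0)"
proof -
  define \<phi> where "\<phi> t p = ln \<bar>fst p - snd p\<bar> * (u (fst p) + t * v (fst p))^2 * (u (snd p) + t * v (snd p))^2"
    for t p
  have deriv: "((\<lambda>t. \<integral>p. \<phi> t p \<partial>lborel2) has_real_derivative
     (if integrable lborel2 (\<phi> 0) then \<integral>p. ln \<bar>fst p - snd p\<bar> *
       (2 * u (fst p) * v (fst p) * (u (snd p))^2 + (u (fst p))^2 * (2 * u (snd p) * v (snd p))) \<partial>lborel2
      else 0)) (at 0)"
  proof (rule has_real_derivative_integral_or_zero[where g="\<lambda>p. 0" and C=15 and \<delta>=1])
    show "\<bar>\<phi> t p - \<phi> 0 p\<bar> \<le> \<bar>t\<bar> * (0 + 15 * \<bar>\<phi> 0 p\<bar>)" if "\<bar>t\<bar> < 1" for t p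
    proof -
      have "\<bar>\<phi> t p - \<phi> 0 p\<bar> = \<bar>ln \<bar>fst p - snd p\<bar>\<bar> *
          \<bar>(u (fst p) + t * v (fst p))^2 * (u (snd p) + t * v (snd p))^2 - (u (fst p))^2 * (u (snd p))^2\<bar>"
        unfolding \<phi>_def by (simp add: abs_mult[symmetric] algebra_simps)
      also have "\<dots> \<le> \<bar>ln \<bar>fst p - snd p\<bar>\<bar> * (\<bar>t\<bar> * (15 * ((u (fst p))^2 * (u (snd p))^2)))"
        by (intro mult_left_mono abs_square_product_shift_le dominated that) auto
      also have "\<dots> = \<bar>t\<bar> * (0 + 15 * \<bar>\<phi> 0 p\<bar>)"
        unfolding \<phi>_def by (simp add: abs_mult algebra_simps)
      finally show ?thesis .
    qed
  qed (auto simp: \<phi>_def algebra_simps intro!: derivative_eq_intros)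
  have "V0 (\<lambda>x. u x + t * v x) = (\<integral>p. \<phi> t p \<partial>lborel2)" for t
    unfolding V0_def \<phi>_def by simp
  moreover have "\<phi> 0 = (\<lambda>p. ln \<bar>fst p - snd p\<bar> * (u (fst p))^2 * (u (snd p))^2)"
    unfolding \<phi>_def by simp
  ultimately show ?thesis
    using deriv unfolding dV0_def by simp
qed

definition dFint :: "(real \<Rightarrow> real) \<Rightarrow> (real \<Rightarrow> real) \<Rightarrow> (real \<Rightarrow> real) \<Rightarrow> real" where
  "dFint f u v = (if integrable lborel (\<lambda>x. primF f (u x)) then \<integral>x. f (u x) * v x \<partial>lborel else 0)"

lemma has_real_derivative_primF_integral:
  assumes cont: "continuous_on UNIV f"
    and lin: "\<And>s. \<bar>s\<bar> \<le> 2 * m \<Longrightarrow> \<bar>f s\<bar> \<le> L * \<bar>s\<bar>" and "0 \<le> L"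
    and [measurable]: "u \<in> borel_measurable lborel" "v \<in> borel_measurable lborel"
    and dominated: "\<And>x. \<bar>v x\<bar> \<le> \<bar>u x\<bar>" and vanishing: "\<And>x. m \<le> \<bar>u x\<bar> \<Longrightarrow> v x = 0"
    and "integrable lborel (\<lambda>x. (u x)^2)"
  shows "((\<lambda>t. \<integral>x. primF f (u x + t * v x) \<partial>lborel) has_real_derivative dFint f u v) (at 0)"
proof -
  have [measurable]: "f \<in> borel_measurable borel"
    using cont by (rule borel_measurable_continuous_onI)
  have "((\<lambda>t. \<integral>x. primF f (u x + t * v x) \<partial>lborel) has_real_derivative
     (if integrable lborel (\<lambda>x. primF f (u x + 0 * v x)) then \<integral>x. f (u x) * v x \<partial>lborel else 0)) (at 0)"
  proof (rule has_real_derivative_integral_or_zero[where g="\<lambda>x. 2 * L * (u x)^2" and C=0 and \<delta>=1])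
    show "\<bar>primF f (u x + t * v x) - primF f (u x + 0 * v x)\<bar>
        \<le> \<bar>t\<bar> * (2 * L * (u x)^2 + 0 * \<bar>primF f (u x + 0 * v x)\<bar>)" if "\<bar>t\<bar> < 1" for t x
    proof (cases "m \<le> \<bar>u x\<bar>")
      case True
      then show ?thesis using vanishing[OF True] \<open>0 \<le> L\<close> by simp
    next
      case False
      have tv: "\<bar>t * v x\<bar> \<le> \<bar>u x\<bar>"
        using that dominated[of x] by (simp add: abs_mult mult_le_one order_trans[OF mult_left_le_one_le])
      have "\<bar>primF f (u x + t * v x) - primF f (u x)\<bar> \<le> L * (2 * \<bar>u x\<bar>) * \<bar>t * v x\<bar>"
        using primF_diff_le[OF cont _ \<open>0 \<le> L\<close>, of "2 * \<bar>u x\<bar>" "u x" "u x + t * v x"] lin False tv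
        by auto
      also have "\<dots> \<le> L * (2 * \<bar>u x\<bar>) * (\<bar>t\<bar> * \<bar>u x\<bar>)"
        using dominated[of x] \<open>0 \<le> L\<close> by (intro mult_left_mono) (auto simp: abs_mult intro: mult_left_mono)
      also have "\<dots> = \<bar>t\<bar> * (2 * L * (u x)^2)"
        by (simp add: power2_eq_square algebra_simps)
      finally show ?thesis
        by simp
    qed
    show "((\<lambda>t. primF f (u x + t * v x)) has_real_derivative f (u x) * v x) (at 0)" for x
    proof -
      have "((\<lambda>t. primF f (u x + t * v x)) has_real_derivative f (u x + 0 * v x) * (0 + 1 * v x)) (at 0)"
        by (rule DERIV_chain2[OF has_real_derivative_primF[OF cont]]) (auto intro!: derivative_eq_intros)
      then show ?thesis
        by simp
    qed
  qed (use assms in auto)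
  then show ?thesis
    by (simp add: dFint_def)
qed

definition Ifun_diff :: "(real \<Rightarrow> real) \<Rightarrow> (real \<Rightarrow> real) \<Rightarrow> (real \<Rightarrow> real) \<Rightarrow> real" where
  "Ifun_diff f u v = ((\<integral>z. 2 * diffquot u z * diffquot v z \<partial>lborel2) + (\<integral>x. 2 * u x * v x \<partial>lborel)) / 2
     + dV0 u v / 4 - dFint f u v"

lemma has_real_derivative_Ifun:
  assumes "continuous_on UNIV f"
    and "\<And>s. \<bar>s\<bar> \<le> 2 * m \<Longrightarrow> \<bar>f s\<bar> \<le> L * \<bar>s\<bar>" and "0 \<le> L"
    and u: "u \<in> H12" and v: "v \<in> H12"
    and "\<And>x. \<bar>v x\<bar> \<le> \<bar>u x\<bar>" and "\<And>x. m \<le> \<bar>u x\<bar> \<Longrightarrow> v x = 0"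
  shows "((\<lambda>t. Ifun f (\<lambda>x. u x + t * v x)) has_real_derivative Ifun_diff f u v) (at 0)"
proof -
  have [measurable]: "u \<in> borel_measurable lborel" "v \<in> borel_measurable lborel"
    using u v by (auto dest: H12_measurable)
  note parts = has_real_derivative_gagliardo[OF u v] has_real_derivative_L2sq[OF u v]
    has_real_derivative_V0[of u v] has_real_derivative_primF_integral[of f m L u v]
  have "((\<lambda>t. (enn2real (gagliardo (\<lambda>x. u x + t * v x)) + enn2real (L2sq (\<lambda>x. u x + t * v x))) / 2
      + V0 (\<lambda>x. u x + t * v x) / 4 - (\<integral>x. primF f (u x + t * v x) \<partial>lborel)) has_real_derivative
      Ifun_diff f u v) (at 0)"
    unfolding Ifun_diff_def using assms H12_integrable_square[OF u]
    by (intro DERIV_diff DERIV_add DERIV_cdivide parts) auto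
  then show ?thesis
    unfolding Ifun_def hnorm_sq .
qed

section \<open>Truncation\<close>

text \<open>The tent \<open>cutoff m\<close> is the identity on \<open>[-m, m]\<close> and vanishes for \<open>\<bar>s\<bar> \<ge> 2 m\<close>.
  Unlike a plain clamp it kills the region where \<open>u\<close> is large, about which \<open>f\<close> tells us nothing.\<close>
definition cutoff :: "real \<Rightarrow> real \<Rightarrow> real" where
  "cutoff m s = max 0 (min s (2*m - s)) + min 0 (max s (-2*m - s))"

lemma cutoff_abs_le: "0 \<le> m \<Longrightarrow> \<bar>cutoff m s\<bar> \<le> \<bar>s\<bar>"
  unfolding cutoff_def by (auto simp: max_def min_def)

lemma cutoff_lipschitz: "0 \<le> m \<Longrightarrow> \<bar>cutoff m a - cutoff m b\<bar> \<le> \<bar>a - b\<bar>"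
  unfolding cutoff_def by (auto simp: max_def min_def)

lemma cutoff_eq_self: "\<bar>s\<bar> \<le> m \<Longrightarrow> cutoff m s = s"
  unfolding cutoff_def by (auto simp: max_def min_def)

lemma cutoff_eq_0: "0 \<le> m \<Longrightarrow> 2*m \<le> \<bar>s\<bar> \<Longrightarrow> cutoff m s = 0"
  unfolding cutoff_def by (auto simp: max_def min_def)

lemma cutoff_0 [simp]: "cutoff m 0 = 0"
  unfolding cutoff_def by (auto simp: max_def min_def)

lemma cutoff_same_sign: "0 \<le> m \<Longrightarrow> 0 \<le> s * cutoff m s"
  unfolding cutoff_def by (auto simp: max_def min_def zero_le_mult_iff)

lemma cutoff_measurable [measurable]: "cutoff m \<in> borel_measurable borel"
  unfolding cutoff_def by measurable

lemma eventually_cutoff_eq: "\<forall>\<^sub>F m in sequentially. cutoff (real m) s = s"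
  using eventually_ge_at_top[of "nat \<lceil>\<bar>s\<bar>\<rceil>"]
  by eventually_elim (auto intro: cutoff_eq_self simp: le_nat_iff)

lemma f3_cutoff_bound:
  assumes "f3 f" and "0 \<le> M"
  shows "4 * (if \<bar>s\<bar> \<le> M then primF f s else 0) \<le> f s * cutoff M s"
proof (cases "s = 0")
  case False
  show ?thesis
  proof (cases "\<bar>s\<bar> \<le> M")
    case True
    then show ?thesis
      using f3_D(2)[OF assms(1) False] by (simp add: cutoff_eq_self)
  next
    case outside: False
    have "0 < f s * s"
      using f3_D[OF assms(1) False] by linarith
    moreover have "0 \<le> s * cutoff M s"
      using \<open>0 \<le> M\<close> by (rule cutoff_same_sign)
    ultimately have "0 \<le> f s * cutoff M s"
      using False by (auto simp: zero_less_mult_iff zero_le_mult_iff)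
    with outside show ?thesis
      by simp
  qed
qed simp

definition truncation :: "nat \<Rightarrow> (real \<Rightarrow> real) \<Rightarrow> real \<Rightarrow> real" where
  "truncation m u x = cutoff (real m) (u x)"

lemma truncation_measurable [measurable]:
  "u \<in> borel_measurable M \<Longrightarrow> truncation m u \<in> borel_measurable M"
  unfolding truncation_def[abs_def] by measurable

lemma eventually_truncation_eq: "\<forall>\<^sub>F m in sequentially. truncation m u x = u x"
  unfolding truncation_def by (rule eventually_cutoff_eq)

lemma abs_truncation_le: "\<bar>truncation m u x\<bar> \<le> \<bar>u x\<bar>"
  unfolding truncation_def by (simp add: cutoff_abs_le)

lemma abs_truncation_diff_le: "\<bar>truncation m u x - truncation m u y\<bar> \<le> \<bar>u x - u y\<bar>"
  unfolding truncation_def by (simp add: cutoff_lipschitz)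

lemma truncation_eq_0: "2 * real m \<le> \<bar>u x\<bar> \<Longrightarrow> truncation m u x = 0"
  unfolding truncation_def by (simp add: cutoff_eq_0)

lemma abs_diffquot_truncation_le: "\<bar>diffquot (truncation m u) z\<bar> \<le> \<bar>diffquot u z\<bar>"
  unfolding diffquot_def truncation_def abs_divide by (intro divide_right_mono cutoff_lipschitz) auto

lemma integrable_mult_truncation:
  assumes "continuous_on UNIV f" and "f2 f" and "f 0 = 0"
    and [measurable]: "u \<in> borel_measurable lborel" and "integrable lborel (\<lambda>x. (u x)^2)"
  shows "integrable lborel (\<lambda>x. f (u x) * truncation m u x)"
proof -
  have [measurable]: "f \<in> borel_measurable borel"
    using assms(1) by (rule borel_measurable_continuous_onI)
  obtain L where "0 \<le> L" and lin: "\<And>s. \<bar>s\<bar> \<le> 2 * real m \<Longrightarrow> \<bar>f s\<bar> \<le> L * \<bar>s\<bar>"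
    using f2_linear_bound[OF assms(1-3)] by blast
  have bound: "\<bar>f (u x) * truncation m u x\<bar> \<le> L * (u x)^2" for x
  proof (cases "2 * real m \<le> \<bar>u x\<bar>")
    case True
    then show ?thesis
      using \<open>0 \<le> L\<close> by (simp add: truncation_eq_0)
  next
    case False
    then have "\<bar>f (u x)\<bar> * \<bar>truncation m u x\<bar> \<le> (L * \<bar>u x\<bar>) * \<bar>u x\<bar>"
      using lin[of "u x"] abs_truncation_le[of m u x] \<open>0 \<le> L\<close> by (intro mult_mono) auto
    then show ?thesis
      by (simp add: abs_mult power2_eq_square mult_ac)
  qed
  show ?thesis
  proof (rule Bochner_Integration.integrable_bound)
    show "integrable lborel (\<lambda>x. L * (u x)^2)"
      using assms(5) by simp
    show "(\<lambda>x. f (u x) * truncation m u x) \<in> borel_measurable lborel"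
      by measurable
    show "AE x in lborel. norm (f (u x) * truncation m u x) \<le> norm (L * (u x)^2)"
      using bound \<open>0 \<le> L\<close> by (intro AE_I2) simp
  qed
qed

section \<open>Testing \<open>I'\<close> against truncations\<close>

lemma tendsto_diffquot_pairing_truncation:
  assumes "u \<in> H12"
  shows "(\<lambda>m. \<integral>z. 2 * diffquot u z * diffquot (truncation m u) z \<partial>lborel2)
    \<longlonglongrightarrow> (\<integral>z. 2 * (diffquot u z)^2 \<partial>lborel2)"
proof (rule tendsto_integral_eventually_eq[where w="\<lambda>z. 2 * (diffquot u z)^2"])
  have [measurable]: "u \<in> borel_measurable lborel"
    using assms by (rule H12_measurable)
  show "(\<lambda>z. 2 * (diffquot u z)^2) \<in> borel_measurable lborel2"
    by measurable
  show "(\<lambda>z. 2 * diffquot u z * diffquot (truncation m u) z) \<in> borel_measurable lborel2" for m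
    by measurable
  show "integrable lborel2 (\<lambda>z. 2 * (diffquot u z)^2)"
    using H12_integrable_diffquot_square[OF assms] by simp
  show "\<forall>\<^sub>F m in sequentially. 2 * diffquot u z * diffquot (truncation m u) z = 2 * (diffquot u z)^2"
    for z
    using eventually_conj[OF eventually_truncation_eq[of u "fst z"] eventually_truncation_eq[of u "snd z"]]
  proof eventually_elim
    case (elim m)
    then have "diffquot (truncation m u) z = diffquot u z"
      by (simp add: diffquot_def)
    then show ?case
      by (simp add: power2_eq_square)
  qed
  show "\<bar>2 * diffquot u z * diffquot (truncation m u) z\<bar> \<le> 2 * (diffquot u z)^2" for m z
    using abs_mult_le_square[OF abs_diffquot_truncation_le] by (simp add: abs_mult)
qed

lemma tendsto_L2_pairing_truncation:
  assumes "u \<in> H12"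
  shows "(\<lambda>m. \<integral>x. 2 * u x * truncation m u x \<partial>lborel) \<longlonglongrightarrow> (\<integral>x. 2 * (u x)^2 \<partial>lborel)"
proof (rule tendsto_integral_eventually_eq[where w="\<lambda>x. 2 * (u x)^2"])
  have [measurable]: "u \<in> borel_measurable lborel"
    using assms by (rule H12_measurable)
  show "(\<lambda>x. 2 * (u x)^2) \<in> borel_measurable lborel"
    by measurable
  show "(\<lambda>x. 2 * u x * truncation m u x) \<in> borel_measurable lborel" for m
    by measurable
  show "integrable lborel (\<lambda>x. 2 * (u x)^2)"
    using H12_integrable_square[OF assms] by simp
  show "\<forall>\<^sub>F m in sequentially. 2 * u x * truncation m u x = 2 * (u x)^2" for x
    using eventually_truncation_eq[of u x] by eventually_elim (simp add: power2_eq_square)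
  show "\<bar>2 * u x * truncation m u x\<bar> \<le> 2 * (u x)^2" for m x
    using abs_mult_le_square[OF abs_truncation_le] by (simp add: abs_mult)
qed

lemma tendsto_dV0_truncation:
  assumes "u \<in> H12"
  shows "(\<lambda>m. dV0 u (truncation m u)) \<longlonglongrightarrow> 4 * V0 u"
proof (cases "integrable lborel2 (\<lambda>p. ln \<bar>fst p - snd p\<bar> * (u (fst p))^2 * (u (snd p))^2)")
  case False
  then show ?thesis
    by (simp add: dV0_def V0_def not_integrable_integral_eq)
next
  case True
  have [measurable]: "u \<in> borel_measurable lborel"
    using assms by (rule H12_measurable)
  have "(\<lambda>m. \<integral>p. ln \<bar>fst p - snd p\<bar> *
      (2 * u (fst p) * truncation m u (fst p) * (u (snd p))^2
       + (u (fst p))^2 * (2 * u (snd p) * truncation m u (snd p))) \<partial>lborel2)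
    \<longlonglongrightarrow> (\<integral>p. 4 * (ln \<bar>fst p - snd p\<bar> * (u (fst p))^2 * (u (snd p))^2) \<partial>lborel2)"
  proof (rule tendsto_integral_eventually_eq
      [where w="\<lambda>p. 4 * \<bar>ln \<bar>fst p - snd p\<bar> * (u (fst p))^2 * (u (snd p))^2\<bar>"])
    show "(\<lambda>p. 4 * (ln \<bar>fst p - snd p\<bar> * (u (fst p))^2 * (u (snd p))^2)) \<in> borel_measurable lborel2"
      by measurable
    show "(\<lambda>p. ln \<bar>fst p - snd p\<bar> *
        (2 * u (fst p) * truncation m u (fst p) * (u (snd p))^2
         + (u (fst p))^2 * (2 * u (snd p) * truncation m u (snd p)))) \<in> borel_measurable lborel2" for m
      by measurable
    show "integrable lborel2 (\<lambda>p. 4 * \<bar>ln \<bar>fst p - snd p\<bar> * (u (fst p))^2 * (u (snd p))^2\<bar>)"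
      using True by auto
    show "\<forall>\<^sub>F m in sequentially. ln \<bar>fst p - snd p\<bar> *
        (2 * u (fst p) * truncation m u (fst p) * (u (snd p))^2
         + (u (fst p))^2 * (2 * u (snd p) * truncation m u (snd p)))
      = 4 * (ln \<bar>fst p - snd p\<bar> * (u (fst p))^2 * (u (snd p))^2)" for p
      using eventually_conj[OF eventually_truncation_eq[of u "fst p"] eventually_truncation_eq[of u "snd p"]]
      by eventually_elim (simp add: power2_eq_square algebra_simps)
    show "\<bar>ln \<bar>fst p - snd p\<bar> *
        (2 * u (fst p) * truncation m u (fst p) * (u (snd p))^2
         + (u (fst p))^2 * (2 * u (snd p) * truncation m u (snd p)))\<bar>
      \<le> 4 * \<bar>ln \<bar>fst p - snd p\<bar> * (u (fst p))^2 * (u (snd p))^2\<bar>" for m p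
    proof -
      define a b c d where "a = u (fst p)" and "b = truncation m u (fst p)"
        and "c = u (snd p)" and "d = truncation m u (snd p)"
      have "\<bar>2 * (a * b) * c^2 + a^2 * (2 * (c * d))\<bar> \<le> 2 * \<bar>a * b\<bar> * c^2 + a^2 * (2 * \<bar>c * d\<bar>)"
        by (rule order_trans[OF abs_triangle_ineq]) (simp add: abs_mult)
      also have "\<dots> \<le> 2 * a^2 * c^2 + a^2 * (2 * c^2)"
        using abs_mult_le_square[OF abs_truncation_le, of u "fst p" m]
          abs_mult_le_square[OF abs_truncation_le, of u "snd p" m]
        unfolding a_def b_def c_def d_def
        by (intro add_mono mult_right_mono mult_left_mono) auto
      finally have "\<bar>2 * a * b * c^2 + a^2 * (2 * c * d)\<bar> \<le> 4 * (a^2 * c^2)"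
        by (simp add: mult_ac)
      then have "\<bar>ln \<bar>fst p - snd p\<bar>\<bar> * \<bar>2 * a * b * c^2 + a^2 * (2 * c * d)\<bar>
          \<le> \<bar>ln \<bar>fst p - snd p\<bar>\<bar> * (4 * (a^2 * c^2))"
        by (rule mult_left_mono) simp
      then show ?thesis
        unfolding a_def b_def c_def d_def by (simp add: abs_mult mult_ac)
    qed
  qed
  then show ?thesis
    using True by (simp add: dV0_def V0_def)
qed

lemma integral_primF_truncated_le_dFint:
  assumes "continuous_on UNIV f" and "f2 f" and "f 0 = 0" and "f3 f"
    and "u \<in> H12" and int: "integrable lborel (\<lambda>x. primF f (u x))"
  shows "4 * (\<integral>x. (if \<bar>u x\<bar> \<le> real m then primF f (u x) else 0) \<partial>lborel)
    \<le> dFint f u (truncation m u)"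
proof -
  have [measurable]: "u \<in> borel_measurable lborel" "primF f \<in> borel_measurable borel"
    using assms by (auto dest: H12_measurable)
  have "4 * (\<integral>x. (if \<bar>u x\<bar> \<le> real m then primF f (u x) else 0) \<partial>lborel)
      = (\<integral>x. 4 * (if \<bar>u x\<bar> \<le> real m then primF f (u x) else 0) \<partial>lborel)"
    by simp
  also have "\<dots> \<le> (\<integral>x. f (u x) * truncation m u x \<partial>lborel)"
  proof (rule integral_mono)
    show "integrable lborel (\<lambda>x. f (u x) * truncation m u x)"
      using assms H12_integrable_square[OF assms(5)] by (intro integrable_mult_truncation) auto
    show "integrable lborel (\<lambda>x. 4 * (if \<bar>u x\<bar> \<le> real m then primF f (u x) else 0))"
    proof (rule Bochner_Integration.integrable_bound)
      show "integrable lborel (\<lambda>x. 4 * primF f (u x))"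
        using int by simp
      show "(\<lambda>x. 4 * (if \<bar>u x\<bar> \<le> real m then primF f (u x) else 0)) \<in> borel_measurable lborel"
        by measurable
    qed (intro AE_I2, simp)
    show "4 * (if \<bar>u x\<bar> \<le> real m then primF f (u x) else 0) \<le> f (u x) * truncation m u x" for x
      unfolding truncation_def using \<open>f3 f\<close> by (rule f3_cutoff_bound) simp
  qed
  also have "\<dots> = dFint f u (truncation m u)"
    using int by (simp add: dFint_def)
  finally show ?thesis .
qed

lemma eventually_dFint_truncation_ge:
  assumes "continuous_on UNIV f" and "f2 f" and "f 0 = 0" and "f3 f"
    and "u \<in> H12" and "0 < e"
  shows "\<forall>\<^sub>F m in sequentially. 4 * (\<integral>x. primF f (u x) \<partial>lborel) - e \<le> dFint f u (truncation m u)"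
proof (cases "integrable lborel (\<lambda>x. primF f (u x))")
  case False
  then show ?thesis
    using \<open>0 < e\<close> by (simp add: dFint_def not_integrable_integral_eq)
next
  case True
  have "\<forall>\<^sub>F m in sequentially. (\<integral>x. primF f (u x) \<partial>lborel) - e / 4
      < (\<integral>x. (if \<bar>u x\<bar> \<le> real m then primF f (u x) else 0) \<partial>lborel)"
    using \<open>0 < e\<close> by (intro order_tendstoD(1)[OF tendsto_integral_sublevel[OF True
      H12_measurable[OF \<open>u \<in> H12\<close>]]]) simp
  then show ?thesis
  proof eventually_elim
    case (elim m)
    then show ?case
      using integral_primF_truncated_le_dFint[OF assms(1-5) True, of m] by linarith
  qed
qed

lemma eventually_Ifun_diff_truncation:
  assumes "continuous_on UNIV f" and "f2 f" and "f 0 = 0" and "f3 f"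
    and u: "u \<in> H12" and "0 < e"
  shows "\<forall>\<^sub>F m in sequentially. (hnorm u)^2 / 4 - e \<le> Ifun f u - Ifun_diff f u (truncation m u) / 4"
proof -
  have um [measurable]: "u \<in> borel_measurable lborel"
    using u by (rule H12_measurable)
  define g0 l0 G0 where "g0 = (\<integral>z. (diffquot u z)^2 \<partial>lborel2)" and "l0 = (\<integral>x. (u x)^2 \<partial>lborel)"
    and "G0 = (\<integral>x. primF f (u x) \<partial>lborel)"
  have hnorm_u: "(hnorm u)^2 = g0 + l0"
    unfolding hnorm_sq g0_def l0_def enn2real_gagliardo[OF um] enn2real_L2sq[OF um] ..
  have Ifun_u: "Ifun f u = (g0 + l0) / 2 + V0 u / 4 - G0"
    unfolding Ifun_def hnorm_u G0_def ..
  define A B where "A m = (\<integral>z. 2 * diffquot u z * diffquot (truncation m u) z \<partial>lborel2)"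
    and "B m = (\<integral>x. 2 * u x * truncation m u x \<partial>lborel)" for m
  define X where "X m = Ifun f u - ((A m + B m) / 2 + dV0 u (truncation m u) / 4) / 4" for m
  have "X \<longlonglongrightarrow> Ifun f u - ((2 * g0 + 2 * l0) / 2 + 4 * V0 u / 4) / 4"
    unfolding X_def A_def B_def g0_def l0_def
    by (intro tendsto_intros tendsto_diffquot_pairing_truncation[OF u, simplified]
        tendsto_L2_pairing_truncation[OF u, simplified] tendsto_dV0_truncation[OF u]) simp_all
  moreover have "Ifun f u - ((2 * g0 + 2 * l0) / 2 + 4 * V0 u / 4) / 4 = (g0 + l0) / 4 - G0"
    unfolding Ifun_u by (simp add: field_simps)
  ultimately have "\<forall>\<^sub>F m in sequentially. (g0 + l0) / 4 - G0 - e / 2 < X m"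
    using \<open>0 < e\<close> by (intro order_tendstoD) auto
  moreover have "\<forall>\<^sub>F m in sequentially. 4 * G0 - 2 * e \<le> dFint f u (truncation m u)"
    unfolding G0_def using assms \<open>0 < e\<close> by (intro eventually_dFint_truncation_ge) auto
  ultimately show ?thesis
  proof eventually_elim
    case (elim m)
    then show ?case
      unfolding hnorm_u X_def Ifun_diff_def A_def B_def by (simp add: field_simps)
  qed
qed

lemma Ifun_truncation_direction:
  assumes "continuous_on UNIV f" and "f2 f" and "f 0 = 0" and "f3 f"
    and u: "u \<in> Xsp" and "0 < e"
  obtains w D where "w \<in> Xsp" and "normX w \<le> normX u"
    and "((\<lambda>t. Ifun f (\<lambda>x. u x + t * w x)) has_real_derivative D) (at 0)"
    and "(hnorm u)^2 / 4 - e \<le> Ifun f u - D / 4"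
proof -
  have uH: "u \<in> H12"
    using u by (simp add: Xsp_def)
  have [measurable]: "u \<in> borel_measurable lborel"
    using uH by (rule H12_measurable)
  obtain m where m: "(hnorm u)^2 / 4 - e \<le> Ifun f u - Ifun_diff f u (truncation m u) / 4"
    using eventually_Ifun_diff_truncation[OF assms(1-4) uH \<open>0 < e\<close>]
    unfolding eventually_sequentially by blast
  have "\<bar>truncation m u x\<bar> \<le> 1 * \<bar>u x\<bar>" "\<bar>truncation m u x - truncation m u y\<bar> \<le> 1 * \<bar>u x - u y\<bar>"
    for x y by (simp_all add: abs_truncation_le abs_truncation_diff_le)
  note wX = Xsp_dominated[OF u truncation_measurable zero_le_one this]
  obtain L where "0 \<le> L" and "\<And>s. \<bar>s\<bar> \<le> 2 * (2 * real m) \<Longrightarrow> \<bar>f s\<bar> \<le> L * \<bar>s\<bar>"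
    using f2_linear_bound[OF assms(1-3)] by blast
  then have "((\<lambda>t. Ifun f (\<lambda>x. u x + t * truncation m u x)) has_real_derivative
      Ifun_diff f u (truncation m u)) (at 0)"
    using assms(1) wX(1) uH abs_truncation_le truncation_eq_0
    by (intro has_real_derivative_Ifun[where m="2 * real m"]) (auto simp: Xsp_def)
  with wX m show thesis
    by (intro that) auto
qed

lemma dualnorm_dI_ge:
  assumes w: "w \<in> Xsp" and "normX w \<le> c" and "0 < c"
    and deriv: "((\<lambda>t. Ifun f (\<lambda>x. u x + t * w x)) has_real_derivative D) (at 0)"
  shows "ereal (\<bar>D\<bar> / c) \<le> dualnorm_dI f u"
proof -
  have [measurable]: "w \<in> borel_measurable lborel"
    using w by (simp add: Xsp_def H12_def)
  define v where "v x = w x / c" for x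
  have "v \<in> borel_measurable lborel"
    unfolding v_def by measurable
  moreover have "\<bar>v x\<bar> \<le> 1 / c * \<bar>w x\<bar>" "\<bar>v x - v y\<bar> \<le> 1 / c * \<bar>w x - w y\<bar>" for x y
    using \<open>0 < c\<close> by (simp_all add: v_def abs_divide diff_divide_distrib[symmetric])
  ultimately have vX: "v \<in> Xsp" "normX v \<le> 1 / c * normX w"
    using \<open>0 < c\<close> Xsp_dominated[OF w, of v "1 / c"] by auto
  moreover have "normX w / c \<le> 1"
    using \<open>normX w \<le> c\<close> \<open>0 < c\<close> by simp
  ultimately have "normX v \<le> 1"
    by simp
  have "((\<lambda>t. Ifun f (\<lambda>x. u x + (t / c) * w x)) has_real_derivative D * (1 / c)) (at 0)"
  proof (rule DERIV_chain2[where f="\<lambda>s. Ifun f (\<lambda>x. u x + s * w x)" and g="\<lambda>t. t / c"])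
    show "((\<lambda>s. Ifun f (\<lambda>x. u x + s * w x)) has_real_derivative D) (at (0 / c))"
      using deriv by simp
    show "((\<lambda>t. t / c) has_real_derivative 1 / c) (at 0)"
      using \<open>0 < c\<close> by (auto intro!: derivative_eq_intros)
  qed
  then have "dI f u v = D / c"
    unfolding dI_def v_def by (simp add: DERIV_imp_deriv field_simps)
  moreover have "ereal \<bar>dI f u v\<bar> \<le> dualnorm_dI f u"
    unfolding dualnorm_dI_def using vX(1) \<open>normX v \<le> 1\<close> by (intro SUP_upper) auto
  ultimately show ?thesis
    using \<open>0 < c\<close> by (simp add: abs_divide)
qed

lemma hnorm_le_of_small_dualnorm:
  assumes "continuous_on UNIV f" and "f2 f" and "f 0 = 0" and "f3 f"
    and u: "u \<in> Xsp" and "0 < d" and "Ifun f u < d"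
    and small: "dualnorm_dI f u * ereal (1 + normX u) < 1"
  shows "hnorm u \<le> sqrt (4 * d + 2)"
proof (cases "normX u = 0")
  case True
  moreover have "0 \<le> sqrt (4 * d + 2)"
    using \<open>0 < d\<close> by simp
  ultimately show ?thesis
    using hnorm_le_normX[of u] by linarith
next
  case False
  then have N: "0 < normX u"
    using normX_nonneg[of u] by simp
  obtain w D where "w \<in> Xsp" and "normX w \<le> normX u"
    and deriv: "((\<lambda>t. Ifun f (\<lambda>x. u x + t * w x)) has_real_derivative D) (at 0)"
    and estimate: "(hnorm u)^2 / 4 - 1/4 \<le> Ifun f u - D / 4"
    using Ifun_truncation_direction[OF assms(1-5), of "1/4"] by auto
  have "ereal (\<bar>D\<bar> / normX u) * ereal (1 + normX u) \<le> dualnorm_dI f u * ereal (1 + normX u)"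
    using dualnorm_dI_ge[OF \<open>w \<in> Xsp\<close> \<open>normX w \<le> normX u\<close> N deriv] N
    by (intro ereal_mult_right_mono) auto
  also note small
  finally have "\<bar>D\<bar> / normX u * (1 + normX u) < 1"
    by simp
  moreover have "\<bar>D\<bar> \<le> \<bar>D\<bar> / normX u * (1 + normX u)"
    using N by (simp add: field_simps)
  ultimately have "(hnorm u)^2 \<le> 4 * d + 2"
    using estimate \<open>Ifun f u < d\<close> by linarith
  then show ?thesis
    using hnorm_nonneg[of u] real_le_rsqrt by blast
qed

theorem lemmal9:
  fixes f :: "real \<Rightarrow> real" and u :: "nat \<Rightarrow> real \<Rightarrow> real" and d :: real
  assumes "f1 f \<or> f1' f" and "f2 f" and "f3 f"
    and "\<And>n. u n \<in> Xsp"
    and "d > 0" and "\<And>n. Ifun f (u n) < d"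
    and "(\<lambda>n. dualnorm_dI f (u n) * ereal (1 + normX (u n))) \<longlonglongrightarrow> 0"
  shows "\<exists>C. \<forall>n. hnorm (u n) \<le> C"
proof -
  have "continuous_on UNIV f" and "f 0 = 0"
    using assms(1) unfolding f1_def f1'_def by auto
  have "\<forall>\<^sub>F n in sequentially. dualnorm_dI f (u n) * ereal (1 + normX (u n)) < 1"
    using assms(7) by (rule order_tendstoD) simp
  then have "\<forall>\<^sub>F n in sequentially. norm (hnorm (u n)) \<le> sqrt (4 * d + 2)"
    by eventually_elim
      (use assms hnorm_nonneg \<open>continuous_on UNIV f\<close> \<open>f 0 = 0\<close> hnorm_le_of_small_dualnorm in auto)
  then have "Bseq (\<lambda>n. hnorm (u n))"
    by (rule BfunI)
  then show ?thesis
    by (metis BseqE real_norm_def abs_le_iff)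
qed

end
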